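(* Let $(R,d)$ be a fusion algebra whose set $I$ of irreducible objects is infinite, and let $X\subseteq I$ be a finite generating set. Then the limits $\lim_{n\to\infty}\sqrt[n]{|B_X(n)|}$ and $\lim_{n\to\infty}\sqrt[n]{|S_X(n)|}$ exist and belong to $[1,\infty)$.
   Context: A fusion algebra $(R,d)$ consists of a set $I$ with distinguished $e$ and involution $\alpha\mapsto\bar\alpha$, a unital ring structure on $R=\mathbb{Z}[I]$ with unit $e$ and $\xi\eta=\sum_\alpha N^\alpha_{\xi,\eta}\alpha$, $N^\alpha_{\xi,\eta}\in\mathbb{Z}_{\ge0}$ finitely many nonzero, the involution extending to a $\mathbb{Z}$-linear antimultiplicative involution, Frobenius reciprocity $N^\alpha_{\xi,\eta}=N^\xi_{\alpha,\bar\eta}=N^\eta_{\bar\xi,\alpha}$, and $\mathbb{Z}$-linear multiplicative $d:R\to\mathbb{R}$ with $d(\bar\alpha)=d(\alpha)\ge1$ on $I$. Write $\alpha\subseteq r$ if $\alpha$ has nonzero coefficient in $r$. $|A|=\sum_{\alpha\in A}d(\alpha)^2$. A finite generating set is a finite $X\subseteq I$ with $\bar X=X$ such that every $\alpha\in I$ satisfies $\alpha\subseteq x_1\cdots x_n$ for some $x_i\in X$. $\ell_X(e)=0$, otherwise $\ell_X(\alpha)=\min\{n\ge1:\exists x_1,\dots,x_n\in X,\ \alpha\subseteq x_1\cdots x_n\}$; $B_X(n)=\{\alpha:\ell_X(\alpha)\le n\}$, $S_X(n)=\{\alpha:\ell_X(\alpha)=n\}$. *)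

theory Defs
  imports "HOL-Analysis.Analysis"
begin

text \<open>A fusion algebra is encoded by its basis I (irreducible objects), the unit e,
the involution bar, the fusion coefficients N a x y = N^a_{x,y}, i.e.
x * y = sum_a N a x y * a, and the dimension function d on basis elements
(d on R = Z[I] is its Z-linear extension).\<close>

definition supp :: "'i set \<Rightarrow> ('i \<Rightarrow> 'i \<Rightarrow> 'i \<Rightarrow> nat) \<Rightarrow> 'i \<Rightarrow> 'i \<Rightarrow> 'i set" where
  "supp I N x y = {a \<in> I. N a x y \<noteq> 0}"

locale fusion_algebra =
  fixes I :: "'i set" and e :: 'i and bar :: "'i \<Rightarrow> 'i"
    and N :: "'i \<Rightarrow> 'i \<Rightarrow> 'i \<Rightarrow> nat" and d :: "'i \<Rightarrow> real"
  assumes e_in: "e \<in> I"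
    and bar_in: "\<And>a. a \<in> I \<Longrightarrow> bar a \<in> I"
    and bar_bar: "\<And>a. a \<in> I \<Longrightarrow> bar (bar a) = a"
    and N_zero_outside: "\<And>a x y. x \<in> I \<Longrightarrow> y \<in> I \<Longrightarrow> a \<notin> I \<Longrightarrow> N a x y = 0"
    and finite_supp: "\<And>x y. x \<in> I \<Longrightarrow> y \<in> I \<Longrightarrow> finite (supp I N x y)"
    and unit_left: "\<And>a x. a \<in> I \<Longrightarrow> x \<in> I \<Longrightarrow> N a e x = (if a = x then 1 else 0)"
    and unit_right: "\<And>a x. a \<in> I \<Longrightarrow> x \<in> I \<Longrightarrow> N a x e = (if a = x then 1 else 0)"
    and assoc: "\<And>x y z b. x \<in> I \<Longrightarrow> y \<in> I \<Longrightarrow> z \<in> I \<Longrightarrow> b \<in> I \<Longrightarrow>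
        (\<Sum>a\<in>supp I N x y. N a x y * N b a z) = (\<Sum>a\<in>supp I N y z. N a y z * N b x a)"
    and bar_antimult: "\<And>a x y. a \<in> I \<Longrightarrow> x \<in> I \<Longrightarrow> y \<in> I \<Longrightarrow>
        N (bar a) (bar y) (bar x) = N a x y"
    and frobenius: "\<And>a x y. a \<in> I \<Longrightarrow> x \<in> I \<Longrightarrow> y \<in> I \<Longrightarrow>
        N a x y = N x a (bar y) \<and> N a x y = N y (bar x) a"
    and d_mult: "\<And>x y. x \<in> I \<Longrightarrow> y \<in> I \<Longrightarrow>
        d x * d y = (\<Sum>a\<in>supp I N x y. real (N a x y) * d a)"
    and d_bar: "\<And>a. a \<in> I \<Longrightarrow> d (bar a) = d a"
    and d_ge1: "\<And>a. a \<in> I \<Longrightarrow> d a \<ge> 1"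

text \<open>Coefficients of the product x1 * ... * xn (empty product = e), computed left to right:
 prodcoef (xs @ [x]) a = sum_b prodcoef xs b * N a b x.\<close>
definition prodcoef :: "'i set \<Rightarrow> 'i \<Rightarrow> ('i \<Rightarrow> 'i \<Rightarrow> 'i \<Rightarrow> nat) \<Rightarrow> 'i list \<Rightarrow> 'i \<Rightarrow> nat" where
  "prodcoef I e N xs = foldl (\<lambda>c x. (\<lambda>a. \<Sum>b\<in>{b \<in> I. c b \<noteq> 0}. c b * N a b x))
      (\<lambda>a. if a = e then 1 else 0) xs"

definition contained :: "'i set \<Rightarrow> 'i \<Rightarrow> ('i \<Rightarrow> 'i \<Rightarrow> 'i \<Rightarrow> nat) \<Rightarrow> 'i \<Rightarrow> 'i list \<Rightarrow> bool" where
  "contained I e N a xs \<longleftrightarrow> prodcoef I e N xs a \<noteq> 0"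

definition finite_generating_set ::
  "'i set \<Rightarrow> 'i \<Rightarrow> ('i \<Rightarrow> 'i) \<Rightarrow> ('i \<Rightarrow> 'i \<Rightarrow> 'i \<Rightarrow> nat) \<Rightarrow> 'i set \<Rightarrow> bool" where
  "finite_generating_set I e bar N X \<longleftrightarrow> finite X \<and> X \<subseteq> I \<and> bar ` X = X \<and>
     (\<forall>a\<in>I. \<exists>xs. xs \<noteq> [] \<and> set xs \<subseteq> X \<and> contained I e N a xs)"

definition word_length :: "'i set \<Rightarrow> 'i \<Rightarrow> ('i \<Rightarrow> 'i \<Rightarrow> 'i \<Rightarrow> nat) \<Rightarrow> 'i set \<Rightarrow> 'i \<Rightarrow> nat" where
  "word_length I e N X a = (if a = e then 0 else
     (LEAST n. n \<ge> 1 \<and> (\<exists>xs. length xs = n \<and> set xs \<subseteq> X \<and> contained I e N a xs)))"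

definition ball_X :: "'i set \<Rightarrow> 'i \<Rightarrow> ('i \<Rightarrow> 'i \<Rightarrow> 'i \<Rightarrow> nat) \<Rightarrow> 'i set \<Rightarrow> nat \<Rightarrow> 'i set" where
  "ball_X I e N X n = {a \<in> I. word_length I e N X a \<le> n}"

definition sphere_X :: "'i set \<Rightarrow> 'i \<Rightarrow> ('i \<Rightarrow> 'i \<Rightarrow> 'i \<Rightarrow> nat) \<Rightarrow> 'i set \<Rightarrow> nat \<Rightarrow> 'i set" where
  "sphere_X I e N X n = {a \<in> I. word_length I e N X a = n}"

text \<open>|A| = sum of d(a)^2\<close>
definition dimsize :: "('i \<Rightarrow> real) \<Rightarrow> 'i set \<Rightarrow> real" where
  "dimsize d A = (\<Sum>a\<in>A. (d a)^2)"

end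

theory Submission
  imports Defs
begin

(* Both n \<mapsto> |B_X(n)| and n \<mapsto> |S_X(n)| are bounded below by 1 and submultiplicative,
   so Fekete's lemma, applied to their logarithms, makes the n-th roots converge to a limit
   that is at least 1.  For submultiplicativity, cutting a shortest word for \<alpha> after m letters
   gives \<alpha> \<subseteq> \<beta> \<gamma> with l(\<beta>) \<le> m and l(\<gamma>) \<le> k (with equality if l(\<alpha>) = m + k),
   and for fixed \<beta>, \<gamma> the identity d(\<beta>) d(\<gamma>) = \<Sum>\<^sub>\<alpha> N^\<alpha>_{\<beta>,\<gamma>} d(\<alpha>)
   bounds the sum of d(\<alpha>)^2 over \<alpha> \<subseteq> \<beta> \<gamma> by d(\<beta>)^2 d(\<gamma>)^2.  Spheres are
   nonempty because balls are finite while I is infinite. *)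

lemma subadditive_mult_add:
  fixes a :: "nat \<Rightarrow> real"
  assumes sub: "\<And>m k. a (m + k) \<le> a m + a k"
  shows "a (q * k + r) \<le> real q * a k + a r"
proof (induction q)
  case (Suc q)
  have "a (Suc q * k + r) = a (k + (q * k + r))" by (simp add: algebra_simps)
  also have "\<dots> \<le> a k + a (q * k + r)" by (rule sub)
  finally show ?case using Suc by (simp add: algebra_simps)
qed simp

lemma subadditive_div_le:
  fixes a :: "nat \<Rightarrow> real"
  assumes nonneg: "\<And>n. a n \<ge> 0" and sub: "\<And>m k. a (m + k) \<le> a m + a k"
    and "k \<ge> 1" "n \<ge> 1"
  shows "a n / n \<le> a k / k + (\<Sum>i<k. a i) / n"
proof -
  have "a (n div k * k + n mod k) \<le> real (n div k) * a k + a (n mod k)"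
    using sub by (rule subadditive_mult_add)
  then have "a n \<le> real (n div k) * a k + a (n mod k)"
    by simp
  also have "real (n div k) * a k \<le> real n / k * a k"
  proof (rule mult_right_mono)
    have "real (n div k) * k \<le> n"
      by (metis div_times_less_eq_dividend of_nat_le_iff of_nat_mult)
    then show "real (n div k) \<le> real n / k"
      using \<open>k \<ge> 1\<close> by (simp add: le_divide_eq)
  qed (rule nonneg)
  also have "a (n mod k) \<le> (\<Sum>i<k. a i)"
    using \<open>k \<ge> 1\<close> nonneg by (intro member_le_sum) auto
  finally show ?thesis
    using \<open>n \<ge> 1\<close> by (simp add: field_simps)
qed

lemma subadditive_LIMSEQ_div:
  fixes a :: "nat \<Rightarrow> real"
  assumes nonneg: "\<And>n. a n \<ge> 0" and sub: "\<And>m k. a (m + k) \<le> a m + a k"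
  shows "\<exists>L\<ge>0. (\<lambda>n. a n / n) \<longlonglongrightarrow> L"
proof (intro exI conjI)
  define L where "L = (INF n\<in>{1..}. a n / n)"
  have bdd: "bdd_below ((\<lambda>n. a n / n) ` {1..})"
    using nonneg by (intro bdd_belowI2[of _ 0]) simp
  have L_le: "L \<le> a n / n" if "n \<ge> 1" for n
    unfolding L_def using bdd that by (intro cINF_lower) auto
  show "L \<ge> 0"
    unfolding L_def using nonneg by (intro cINF_greatest) auto
  show "(\<lambda>n. a n / n) \<longlonglongrightarrow> L"
  proof (rule order_tendstoI)
    fix y assume "y < L"
    show "\<forall>\<^sub>F n in sequentially. y < a n / n"
      using eventually_ge_at_top[of 1] by eventually_elim (use L_le \<open>y < L\<close> in force)
  next
    fix y assume "L < y"
    then obtain k where k: "k \<ge> 1" "a k / k < y"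
      using bdd by (auto simp: L_def cINF_less_iff)
    have "\<forall>\<^sub>F n in sequentially. (\<Sum>i<k. a i) / n < y - a k / k"
      using k by (intro order_tendstoD(2)[OF lim_const_over_n]) simp
    then show "\<forall>\<^sub>F n in sequentially. a n / n < y"
      using eventually_ge_at_top[of 1]
    proof eventually_elim
      case (elim n)
      have "a n / n \<le> a k / k + (\<Sum>i<k. a i) / n"
        using nonneg sub k(1) elim(2) by (rule subadditive_div_le)
      then show ?case
        using elim(1) by linarith
    qed
  qed
qed

lemma submultiplicative_LIMSEQ_root:
  fixes f :: "nat \<Rightarrow> real"
  assumes ge_1: "\<And>n. f n \<ge> 1" and submult: "\<And>m k. f (m + k) \<le> f m * f k"
  shows "\<exists>L\<ge>1. (\<lambda>n. root n (f n)) \<longlonglongrightarrow> L"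
proof -
  have pos: "f n > 0" for n
    using ge_1[of n] by simp
  obtain L where "L \<ge> 0" and L: "(\<lambda>n. ln (f n) / n) \<longlonglongrightarrow> L"
  proof -
    have "ln (f (m + k)) \<le> ln (f m) + ln (f k)" for m k
      using ln_mono[OF submult pos] ln_mult_pos[OF pos pos] by simp
    then show ?thesis
      using subadditive_LIMSEQ_div[of "\<lambda>n. ln (f n)"] ge_1 that by auto
  qed
  have "(\<lambda>n. exp (ln (f n) / n)) \<longlonglongrightarrow> exp L"
    using L by (rule tendsto_exp)
  moreover have "\<forall>\<^sub>F n in sequentially. exp (ln (f n) / n) = root n (f n)"
    using eventually_ge_at_top[of 1]
  proof eventually_elim
    case (elim n)
    then show ?case
      using pos[of n] by (simp add: root_powr_inverse powr_def)
  qed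
  ultimately have "(\<lambda>n. root n (f n)) \<longlonglongrightarrow> exp L"
    by (rule Lim_transform_eventually)
  then show ?thesis
    using \<open>L \<ge> 0\<close> by (intro exI[of _ "exp L"]) simp
qed

context fusion_algebra
begin

lemma supp_subset: "supp I N x y \<subseteq> I"
  by (auto simp: supp_def)

lemma supp_unit_right: "b \<in> I \<Longrightarrow> supp I N b e = {b}"
  using unit_right e_in by (auto simp: supp_def split: if_splits)

definition prod_supp :: "'i list \<Rightarrow> 'i set" where
  "prod_supp xs = foldl (\<lambda>S x. \<Union>b\<in>S. supp I N b x) {e} xs"

lemma prod_supp_Nil [simp]: "prod_supp [] = {e}"
  by (simp add: prod_supp_def)

lemma prod_supp_snoc [simp]: "prod_supp (xs @ [x]) = (\<Union>b\<in>prod_supp xs. supp I N b x)"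
  by (simp add: prod_supp_def)

lemma prod_supp_subset_finite:
  assumes "set xs \<subseteq> I"
  shows "prod_supp xs \<subseteq> I \<and> finite (prod_supp xs)"
  using assms
proof (induction xs rule: rev_induct)
  case (snoc x xs)
  then have IH: "prod_supp xs \<subseteq> I" "finite (prod_supp xs)" and "x \<in> I"
    by auto
  have "finite (supp I N b x)" if "b \<in> prod_supp xs" for b
    using finite_supp[of b x] that IH(1) \<open>x \<in> I\<close> by auto
  then show ?case
    using IH(2) supp_subset by auto
qed (simp add: e_in)

lemma prodcoef_nonzero_iff:
  "set xs \<subseteq> I \<Longrightarrow> prodcoef I e N xs a \<noteq> 0 \<longleftrightarrow> a \<in> prod_supp xs"
proof (induction xs arbitrary: a rule: rev_induct)
  case Nil
  then show ?case by (simp add: prodcoef_def)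
next
  case (snoc x xs)
  have "x \<in> I" and xs: "set xs \<subseteq> I"
    using snoc.prems by auto
  then have sub: "prod_supp xs \<subseteq> I" and fin: "finite (prod_supp xs)"
    using prod_supp_subset_finite by auto
  have nonzero: "{b \<in> I. prodcoef I e N xs b \<noteq> 0} = prod_supp xs"
    using snoc.IH[OF xs] sub by auto
  have "prodcoef I e N (xs @ [x]) a
      = (\<Sum>b\<in>{b \<in> I. prodcoef I e N xs b \<noteq> 0}. prodcoef I e N xs b * N a b x)"
    by (simp add: prodcoef_def)
  then have "prodcoef I e N (xs @ [x]) a \<noteq> 0 \<longleftrightarrow>
      (\<exists>b\<in>prod_supp xs. prodcoef I e N xs b * N a b x \<noteq> 0)"
    unfolding nonzero using fin by simp
  also have "\<dots> \<longleftrightarrow> (\<exists>b\<in>prod_supp xs. N a b x \<noteq> 0)"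
    using snoc.IH[OF xs] by auto
  also have "\<dots> \<longleftrightarrow> a \<in> prod_supp (xs @ [x])"
  proof -
    have "a \<in> I" if "b \<in> prod_supp xs" "N a b x \<noteq> 0" for b
      using N_zero_outside[of b x a] sub that \<open>x \<in> I\<close> by auto
    then show ?thesis
      by (auto simp: supp_def)
  qed
  finally show ?case .
qed

lemma contained_iff_in_prod_supp:
  "set xs \<subseteq> I \<Longrightarrow> contained I e N a xs \<longleftrightarrow> a \<in> prod_supp xs"
  unfolding contained_def by (rule prodcoef_nonzero_iff)

text \<open>As all fusion coefficients are nonnegative, a sum of their products vanishes exactly
  when every summand does, so associativity of the coefficients passes to supports.\<close>
lemma UN_supp_assoc:
  assumes "b \<in> I" "g \<in> I" "x \<in> I"
  shows "(\<Union>c\<in>supp I N b g. supp I N c x) = (\<Union>c\<in>supp I N g x. supp I N b c)"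
proof (intro set_eqI)
  fix a
  show "a \<in> (\<Union>c\<in>supp I N b g. supp I N c x) \<longleftrightarrow> a \<in> (\<Union>c\<in>supp I N g x. supp I N b c)"
  proof (cases "a \<in> I")
    case True
    have "a \<in> (\<Union>c\<in>supp I N b g. supp I N c x) \<longleftrightarrow> (\<Sum>c\<in>supp I N b g. N c b g * N a c x) \<noteq> 0"
      using finite_supp[OF assms(1,2)] True by (auto simp: supp_def)
    also have "\<dots> \<longleftrightarrow> (\<Sum>c\<in>supp I N g x. N c g x * N a b c) \<noteq> 0"
      using assoc[OF assms True] by simp
    also have "\<dots> \<longleftrightarrow> a \<in> (\<Union>c\<in>supp I N g x. supp I N b c)"
      using finite_supp[OF assms(2,3)] True by (auto simp: supp_def)
    finally show ?thesis .
  qed (use supp_subset in blast)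
qed

lemma prod_supp_append:
  assumes "set u \<subseteq> I" "set v \<subseteq> I"
  shows "prod_supp (u @ v) = (\<Union>b\<in>prod_supp u. \<Union>g\<in>prod_supp v. supp I N b g)"
  using assms(2)
proof (induction v rule: rev_induct)
  case Nil
  then show ?case
    using prod_supp_subset_finite[OF assms(1)] supp_unit_right by auto
next
  case (snoc x v)
  then have "x \<in> I" "set v \<subseteq> I"
    by auto
  have "prod_supp (u @ v @ [x]) = (\<Union>b\<in>prod_supp u. \<Union>g\<in>prod_supp v. \<Union>c\<in>supp I N b g. supp I N c x)"
    using snoc.IH[OF \<open>set v \<subseteq> I\<close>] prod_supp_snoc[of "u @ v" x] by auto
  also have "\<dots> = (\<Union>b\<in>prod_supp u. \<Union>g\<in>prod_supp v. \<Union>c\<in>supp I N g x. supp I N b c)"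
  proof (rule SUP_cong[OF refl], rule SUP_cong[OF refl])
    fix b g assume "b \<in> prod_supp u" "g \<in> prod_supp v"
    then have "b \<in> I" "g \<in> I"
      using prod_supp_subset_finite[OF assms(1)] prod_supp_subset_finite[OF \<open>set v \<subseteq> I\<close>] by auto
    then show "(\<Union>c\<in>supp I N b g. supp I N c x) = (\<Union>c\<in>supp I N g x. supp I N b c)"
      using \<open>x \<in> I\<close> by (rule UN_supp_assoc)
  qed
  also have "\<dots> = (\<Union>b\<in>prod_supp u. \<Union>g\<in>prod_supp (v @ [x]). supp I N b g)"
    by auto
  finally show ?case
    by simp
qed

lemma d_nonneg: "a \<in> I \<Longrightarrow> d a \<ge> 0"
  using d_ge1[of a] by simp

lemma d_le_coeff_mult_d:
  assumes "a \<in> supp I N b g"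
  shows "d a \<le> real (N a b g) * d a"
proof -
  have "a \<in> I" "N a b g \<ge> 1"
    using assms by (auto simp: supp_def)
  then show ?thesis
    using mult_right_mono[of 1 "real (N a b g)" "d a"] d_nonneg by simp
qed

lemma coeff_mult_d_le:
  assumes "b \<in> I" "g \<in> I" "a \<in> supp I N b g"
  shows "real (N a b g) * d a \<le> d b * d g"
  unfolding d_mult[OF assms(1,2)]
proof (rule member_le_sum)
  show "finite (supp I N b g)"
    using assms(1,2) by (rule finite_supp)
  fix c assume "c \<in> supp I N b g - {a}"
  then have "c \<in> I"
    by (auto simp: supp_def)
  then show "0 \<le> real (N c b g) * d c"
    by (simp add: d_nonneg)
qed (fact assms(3))

lemma dimsize_supp_le:
  assumes "b \<in> I" "g \<in> I"
  shows "dimsize d (supp I N b g) \<le> (d b)\<^sup>2 * (d g)\<^sup>2"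
proof -
  have "dimsize d (supp I N b g) \<le> (\<Sum>a\<in>supp I N b g. real (N a b g) * d a * (d b * d g))"
    unfolding dimsize_def power2_eq_square
  proof (rule sum_mono)
    fix a assume a: "a \<in> supp I N b g"
    then have "a \<in> I"
      by (auto simp: supp_def)
    have "d a \<le> d b * d g"
      using d_le_coeff_mult_d[OF a] coeff_mult_d_le[OF assms a] by linarith
    with d_le_coeff_mult_d[OF a] show "d a * d a \<le> real (N a b g) * d a * (d b * d g)"
      using d_nonneg[OF \<open>a \<in> I\<close>] d_nonneg[OF \<open>a \<in> I\<close>] by (rule mult_mono')
  qed
  also have "\<dots> = (\<Sum>a\<in>supp I N b g. real (N a b g) * d a) * (d b * d g)"
    by (simp add: sum_distrib_right)
  also have "\<dots> = (d b)\<^sup>2 * (d g)\<^sup>2"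
    by (simp add: d_mult[OF assms, symmetric] power2_eq_square)
  finally show ?thesis .
qed

lemma dimsize_ge_1:
  assumes "finite A" "A \<subseteq> I" "a \<in> A"
  shows "dimsize d A \<ge> 1"
proof -
  have "1 \<le> d a"
    using d_ge1 assms by blast
  then have "1 \<le> (d a)\<^sup>2"
    by simp
  also have "\<dots> \<le> dimsize d A"
    unfolding dimsize_def using assms by (intro member_le_sum) auto
  finally show ?thesis .
qed

lemma dimsize_le_mult_if_subset_UN_supp:
  assumes "finite A" "finite B" "A \<subseteq> I" "B \<subseteq> I"
    and "T \<subseteq> (\<Union>b\<in>A. \<Union>g\<in>B. supp I N b g)"
  shows "dimsize d T \<le> dimsize d A * dimsize d B"
proof -
  define S where "S = (SIGMA p:A \<times> B. supp I N (fst p) (snd p))"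
  have fin_supp: "finite (supp I N (fst p) (snd p))" if "p \<in> A \<times> B" for p
    using that assms(3,4) by (intro finite_supp) auto
  have fin: "finite S"
    unfolding S_def using assms(1,2) fin_supp by (intro finite_SigmaI) auto
  have "T \<subseteq> snd ` S"
  proof
    fix a assume "a \<in> T"
    then obtain b g where "b \<in> A" "g \<in> B" "a \<in> supp I N b g"
      using assms(5) by blast
    then have "((b, g), a) \<in> S"
      by (simp add: S_def)
    then show "a \<in> snd ` S"
      by (rule image_eqI[rotated]) simp
  qed
  then have "dimsize d T \<le> dimsize d (snd ` S)"
    unfolding dimsize_def using fin by (intro sum_mono2) simp_all
  also have "\<dots> \<le> (\<Sum>q\<in>S. (d (snd q))\<^sup>2)"
    unfolding dimsize_def using sum_image_le[OF fin, of "\<lambda>a. (d a)\<^sup>2" snd] by (simp add: comp_def)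
  also have "\<dots> = (\<Sum>p\<in>A \<times> B. dimsize d (supp I N (fst p) (snd p)))"
    unfolding S_def dimsize_def using assms(1,2) fin_supp by (subst sum.Sigma) (auto simp: split_def)
  also have "\<dots> \<le> (\<Sum>p\<in>A \<times> B. (d (fst p))\<^sup>2 * (d (snd p))\<^sup>2)"
  proof (rule sum_mono)
    fix p assume "p \<in> A \<times> B"
    then show "dimsize d (supp I N (fst p) (snd p)) \<le> (d (fst p))\<^sup>2 * (d (snd p))\<^sup>2"
      using assms(3,4) by (intro dimsize_supp_le) auto
  qed
  also have "\<dots> = dimsize d A * dimsize d B"
    by (simp add: dimsize_def sum_product sum.cartesian_product split_def)
  finally show ?thesis .
qed

end

locale generated_fusion_algebra = fusion_algebra I e bar N d
  for I :: "'i set" and e bar N d +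
  fixes X :: "'i set"
  assumes generating: "finite_generating_set I e bar N X"
begin

lemma generators_subset: "X \<subseteq> I" and finite_generators: "finite X"
  using generating by (auto simp: finite_generating_set_def)

abbreviation len :: "'i \<Rightarrow> nat" where
  "len \<equiv> word_length I e N X"

lemma word_length_eq_Least:
  assumes "a \<in> I"
  shows "len a = (LEAST n. \<exists>xs. length xs = n \<and> set xs \<subseteq> X \<and> a \<in> prod_supp xs)"
proof (cases "a = e")
  case True
  then show ?thesis
    by (simp add: word_length_def)
next
  case False
  have "(n \<ge> 1 \<and> (\<exists>xs. length xs = n \<and> set xs \<subseteq> X \<and> contained I e N a xs)) \<longleftrightarrow>
      (\<exists>xs. length xs = n \<and> set xs \<subseteq> X \<and> a \<in> prod_supp xs)" for n
    using False generators_subset contained_iff_in_prod_supp by (cases n) auto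
  then show ?thesis
    using False by (simp add: word_length_def)
qed

lemma word_length_witness:
  assumes "a \<in> I"
  obtains xs where "length xs = len a" "set xs \<subseteq> X" "a \<in> prod_supp xs"
proof -
  obtain xs where "set xs \<subseteq> X" "contained I e N a xs"
    using generating assms by (auto simp: finite_generating_set_def)
  then have "\<exists>n xs. length xs = n \<and> set xs \<subseteq> X \<and> a \<in> prod_supp xs"
    using generators_subset contained_iff_in_prod_supp by blast
  then have "\<exists>xs. length xs = len a \<and> set xs \<subseteq> X \<and> a \<in> prod_supp xs"
    unfolding word_length_eq_Least[OF assms] by (rule LeastI_ex)
  then show ?thesis
    using that by blast
qed

lemma word_length_le:
  assumes "set xs \<subseteq> X" "a \<in> prod_supp xs"
  shows "len a \<le> length xs"
proof -
  have "a \<in> I"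
    using assms generators_subset prod_supp_subset_finite by blast
  show ?thesis
    unfolding word_length_eq_Least[OF \<open>a \<in> I\<close>] by (rule Least_le) (use assms in blast)
qed

lemma word_length_supp_le:
  assumes "b \<in> I" "g \<in> I" "a \<in> supp I N b g"
  shows "len a \<le> len b + len g"
proof -
  obtain u where u: "length u = len b" "set u \<subseteq> X" "b \<in> prod_supp u"
    using assms(1) by (rule word_length_witness)
  obtain v where v: "length v = len g" "set v \<subseteq> X" "g \<in> prod_supp v"
    using assms(2) by (rule word_length_witness)
  have "a \<in> prod_supp (u @ v)"
    using prod_supp_append u v generators_subset assms(3) by blast
  then show ?thesis
    using word_length_le[of "u @ v"] u v by simp
qed

lemma word_length_split:
  assumes "a \<in> I" "len a \<le> m + k"
  obtains b g where "b \<in> I" "g \<in> I" "len b \<le> m" "len g \<le> k" "a \<in> supp I N b g"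
proof -
  obtain xs where xs: "length xs = len a" "set xs \<subseteq> X" "a \<in> prod_supp xs"
    using assms(1) by (rule word_length_witness)
  define u v where "u = take m xs" and "v = drop m xs"
  have u: "set u \<subseteq> X" "length u \<le> m" and v: "set v \<subseteq> X" "length v \<le> k"
    using xs(1,2) assms(2) set_take_subset set_drop_subset unfolding u_def v_def by fastforce+
  have "a \<in> prod_supp (u @ v)"
    using xs(3) unfolding u_def v_def by simp
  then obtain b g where b: "b \<in> prod_supp u" and g: "g \<in> prod_supp v" and "a \<in> supp I N b g"
    using prod_supp_append u(1) v(1) generators_subset by blast
  moreover have "b \<in> I" "g \<in> I"
    using b g u(1) v(1) generators_subset prod_supp_subset_finite by blast+
  moreover have "len b \<le> m" "len g \<le> k"
    using word_length_le[OF u(1) b] word_length_le[OF v(1) g] u(2) v(2) by simp_all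
  ultimately show ?thesis
    using that by blast
qed

lemma word_length_split_eq:
  assumes "a \<in> I" "len a = m + k"
  obtains b g where "b \<in> I" "g \<in> I" "len b = m" "len g = k" "a \<in> supp I N b g"
proof -
  have "len a \<le> m + k"
    using assms(2) by simp
  then obtain b g where "b \<in> I" "g \<in> I" "len b \<le> m" "len g \<le> k" "a \<in> supp I N b g"
    by (rule word_length_split[OF assms(1)])
  moreover from this have "len a \<le> len b + len g"
    by (intro word_length_supp_le)
  ultimately show ?thesis
    using that assms(2) by simp
qed

lemma finite_ball_X: "finite (ball_X I e N X n)"
proof (rule finite_subset)
  show "ball_X I e N X n \<subseteq> (\<Union>xs\<in>{xs. set xs \<subseteq> X \<and> length xs \<le> n}. prod_supp xs)"
  proof
    fix a assume "a \<in> ball_X I e N X n"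
    then have "a \<in> I" "len a \<le> n"
      by (auto simp: ball_X_def)
    obtain xs where "length xs = len a" "set xs \<subseteq> X" "a \<in> prod_supp xs"
      using \<open>a \<in> I\<close> by (rule word_length_witness)
    with \<open>len a \<le> n\<close> show "a \<in> (\<Union>xs\<in>{xs. set xs \<subseteq> X \<and> length xs \<le> n}. prod_supp xs)"
      by auto
  qed
  show "finite (\<Union>xs\<in>{xs. set xs \<subseteq> X \<and> length xs \<le> n}. prod_supp xs)"
    using finite_lists_length_le[OF finite_generators] generators_subset prod_supp_subset_finite
    by blast
qed

lemma finite_sphere_X: "finite (sphere_X I e N X n)"
  by (rule finite_subset[OF _ finite_ball_X[of n]]) (auto simp: ball_X_def sphere_X_def)

lemma sphere_X_nonempty:
  assumes "infinite I"
  shows "sphere_X I e N X n \<noteq> {}"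
proof -
  have "\<not> I \<subseteq> ball_X I e N X n"
    using finite_subset[OF _ finite_ball_X] assms by blast
  then obtain a where "a \<in> I" "\<not> len a \<le> n"
    by (auto simp: ball_X_def)
  then have "len a = n + (len a - n)"
    by simp
  then obtain b g where "b \<in> I" "g \<in> I" "len b = n" "len g = len a - n" "a \<in> supp I N b g"
    by (rule word_length_split_eq[OF \<open>a \<in> I\<close>])
  then show ?thesis
    by (auto simp: sphere_X_def)
qed

lemma dimsize_ball_X_ge_1: "dimsize d (ball_X I e N X n) \<ge> 1"
proof (rule dimsize_ge_1)
  show "finite (ball_X I e N X n)"
    by (fact finite_ball_X)
  show "ball_X I e N X n \<subseteq> I"
    by (auto simp: ball_X_def)
  show "e \<in> ball_X I e N X n"
    using e_in by (simp add: ball_X_def word_length_def)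
qed

lemma dimsize_sphere_X_ge_1:
  assumes "infinite I"
  shows "dimsize d (sphere_X I e N X n) \<ge> 1"
proof -
  obtain b where "b \<in> sphere_X I e N X n"
    using sphere_X_nonempty[OF assms] by blast
  moreover have "sphere_X I e N X n \<subseteq> I"
    by (auto simp: sphere_X_def)
  ultimately show ?thesis
    using finite_sphere_X by (intro dimsize_ge_1)
qed

lemma dimsize_ball_X_add_le:
  "dimsize d (ball_X I e N X (m + k)) \<le> dimsize d (ball_X I e N X m) * dimsize d (ball_X I e N X k)"
proof (rule dimsize_le_mult_if_subset_UN_supp)
  show "finite (ball_X I e N X m)" "finite (ball_X I e N X k)"
    by (fact finite_ball_X)+
  show "ball_X I e N X m \<subseteq> I" "ball_X I e N X k \<subseteq> I"
    by (auto simp: ball_X_def)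
  show "ball_X I e N X (m + k) \<subseteq> (\<Union>b\<in>ball_X I e N X m. \<Union>g\<in>ball_X I e N X k. supp I N b g)"
  proof
    fix a assume "a \<in> ball_X I e N X (m + k)"
    then have "a \<in> I" "len a \<le> m + k"
      by (auto simp: ball_X_def)
    then obtain b g where "b \<in> I" "g \<in> I" "len b \<le> m" "len g \<le> k" "a \<in> supp I N b g"
      by (rule word_length_split)
    then show "a \<in> (\<Union>b\<in>ball_X I e N X m. \<Union>g\<in>ball_X I e N X k. supp I N b g)"
      unfolding ball_X_def by blast
  qed
qed

lemma dimsize_sphere_X_add_le:
  "dimsize d (sphere_X I e N X (m + k)) \<le> dimsize d (sphere_X I e N X m) * dimsize d (sphere_X I e N X k)"
proof (rule dimsize_le_mult_if_subset_UN_supp)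
  show "finite (sphere_X I e N X m)" "finite (sphere_X I e N X k)"
    by (fact finite_sphere_X)+
  show "sphere_X I e N X m \<subseteq> I" "sphere_X I e N X k \<subseteq> I"
    by (auto simp: sphere_X_def)
  show "sphere_X I e N X (m + k) \<subseteq> (\<Union>b\<in>sphere_X I e N X m. \<Union>g\<in>sphere_X I e N X k. supp I N b g)"
  proof
    fix a assume "a \<in> sphere_X I e N X (m + k)"
    then have "a \<in> I" "len a = m + k"
      by (auto simp: sphere_X_def)
    then obtain b g where "b \<in> I" "g \<in> I" "len b = m" "len g = k" "a \<in> supp I N b g"
      by (rule word_length_split_eq)
    then show "a \<in> (\<Union>b\<in>sphere_X I e N X m. \<Union>g\<in>sphere_X I e N X k. supp I N b g)"
      unfolding sphere_X_def by blast
  qed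
qed

end

theorem lemma3p8:
  fixes I :: "'i set" and e :: 'i and bar :: "'i \<Rightarrow> 'i"
    and N :: "'i \<Rightarrow> 'i \<Rightarrow> 'i \<Rightarrow> nat" and d :: "'i \<Rightarrow> real" and X :: "'i set"
  assumes "fusion_algebra I e bar N d"
    and "infinite I"
    and "finite_generating_set I e bar N X"
  shows "(\<exists>L. L \<ge> 1 \<and> (\<lambda>n. root n (dimsize d (ball_X I e N X n))) \<longlonglongrightarrow> L)
       \<and> (\<exists>L. L \<ge> 1 \<and> (\<lambda>n. root n (dimsize d (sphere_X I e N X n))) \<longlonglongrightarrow> L)"
proof -
  interpret generated_fusion_algebra I e bar N d X
    using assms(1,3) by (simp add: generated_fusion_algebra_def generated_fusion_algebra_axioms_def)
  have "\<exists>L\<ge>1. (\<lambda>n. root n (dimsize d (ball_X I e N X n))) \<longlonglongrightarrow> L"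
    using dimsize_ball_X_ge_1 dimsize_ball_X_add_le by (rule submultiplicative_LIMSEQ_root)
  moreover have "\<exists>L\<ge>1. (\<lambda>n. root n (dimsize d (sphere_X I e N X n))) \<longlonglongrightarrow> L"
    using dimsize_sphere_X_ge_1[OF assms(2)] dimsize_sphere_X_add_le
    by (rule submultiplicative_LIMSEQ_root)
  ultimately show ?thesis
    by blast
qed

end
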